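(* Let $E$ be a nondeterministic expression and $X$ a variable with $E\rhd X$ (i.e. $E\rhd\{X\}$). Then $E = E + X$ is derivable from the axiom system.
   Context: Fix a set $\mathsf{Act}$ of actions containing $\tau$ and a set $\mathsf{Var}$ of variables. Nondeterministic expressions: $E ::= 0 \mid X \mid \alpha.P \mid \mathrm{rec}\,X.E \mid E + E$; probabilistic expressions: $P ::= \partial(E) \mid P \oplus_p P$ ($0<p<1$); $\alpha.E$ abbreviates $\alpha.\partial(E)$. $\mathrm{rec}\,X$ binds $X$; $E[\vec F/\vec X]$ is capture-avoiding substitution. $\sum_{i\in I}E_i$ is an iterated $+$; $\bigoplus_{i\in I}p_iP_i$ (with $\sum p_i=1$) is an iterated $\oplus$ giving $P_i$ probability $p_i$, and $\bigoplus_ip_iE_i$ abbreviates $\bigoplus_ip_i\partial(E_i)$. Probabilistic unguardedness $E\rhd V$ ($V\subseteq\mathsf{Var}$, also for probabilistic expressions) is the least relation with: $X\rhd\{X\}$; $\tau.P\rhd V$ if $P\rhd V$; $\mathrm{rec}\,Y.E\rhd V\setminus\{Y\}$ if $E\rhd V$ and $V\ne\{Y\}$; $E+F\rhd V$ if $E\rhd V$; $E+F\rhd W$ if $F\rhd W$; $\partial(E)\rhd V$ if $E\rhd V$; $P\oplus_pQ\rhd V\cup W$ if $P\rhd V$ and $Q\rhd W$. Provable equality $=$ is the least relation on expressions (both categories) that is an equivalence, a congruence for all operators, allows renaming of bound variables, contains all instances of the axioms below, and is closed under rule R2: N1 $E+F=F+E$; N2 $E+(F+G)=(E+F)+G$;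 N3 $E+E=E$; N4 $E+0=E$; P1 $P\oplus_pQ=Q\oplus_{1-p}P$; P2 $P\oplus_p(Q\oplus_{q/(1-p)}R)=(P\oplus_{p/(p+q)}Q)\oplus_{p+q}R$; P3 $P\oplus_pP=P$; T1 $\alpha.(\partial(\tau.\partial(E))\oplus_pP)=\alpha.(\partial(E)\oplus_pP)$; T2 $\tau.\bigoplus_{i\in I}p_i(E_i+F)+F=\tau.\bigoplus_{i\in I}p_i(E_i+F)$; T3 $\tau.\bigoplus_{i}p_i(E_i+\alpha.P_i)+\alpha.\bigoplus_ip_iP_i=\tau.\bigoplus_ip_i(E_i+\alpha.P_i)$; T4 $\alpha.\bigoplus_ip_i(E_i+\tau.P_i)+\alpha.\bigoplus_ip_iP_i=\alpha.\bigoplus_ip_i(E_i+\tau.P_i)$; C $\alpha.P+\alpha.Q=\alpha.P+\alpha.(P\oplus_pQ)+\alpha.Q$; R1 $\mathrm{rec}\,X.E=E[\mathrm{rec}\,X.E/X]$; R2 if $F=E[F/X]$ and not $E\rhd\{X\}$, then $F=\mathrm{rec}\,X.E$; R3 $\mathrm{rec}\,X.(\tau.(\partial(X+E)\oplus_pP)+F)=\mathrm{rec}\,X.(\tau.(\partial(X+E)\oplus_pP)+\tau.P+F)$; R4 $\mathrm{rec}\,X.(X+E)=\mathrm{rec}\,X.E$; R5 $\mathrm{rec}\,X.(\tau.\partial(X)+E)=\mathrm{rec}\,X.\tau.\partial(E)$; R6 $\mathrm{rec}\,X.(\tau.\bigoplus_{i\in I}p_i(X+E_i)+F)=\mathrm{rec}\,X.(\tau.\partial(X)+\sum_{i\in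 I}E_i+F)$. *)

theory Defs
  imports Main "HOL-Library.Infinite_Typeclass"
begin

typedef prob = "{p::real. 0 < p \<and> p < 1}"
  by (rule exI[of _ "1/2"]) simp

datatype 'a act = Tau | Vis 'a

text \<open>Nondeterministic expressions E ::= 0 | X | alpha.P | rec X.E | E + E;
  probabilistic expressions P ::= partial(E) | P (+)_p P.\<close>

datatype ('a, 'v) nexp =
    Zero
  | V 'v
  | Pre "'a act" "('a, 'v) pexp"
  | Rec 'v "('a, 'v) nexp"
  | Plus "('a, 'v) nexp" "('a, 'v) nexp"
and ('a, 'v) pexp =
    Dirac "('a, 'v) nexp"
  | PPlus "('a, 'v) pexp" prob "('a, 'v) pexp"

primrec fvN :: "('a, 'v) nexp \<Rightarrow> 'v set" and fvP :: "('a, 'v) pexp \<Rightarrow> 'v set" where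
  "fvN Zero = {}"
| "fvN (V X) = {X}"
| "fvN (Pre a P) = fvP P"
| "fvN (Rec X E) = fvN E - {X}"
| "fvN (Plus E F) = fvN E \<union> fvN F"
| "fvP (Dirac E) = fvN E"
| "fvP (PPlus P p Q) = fvP P \<union> fvP Q"

text \<open>Choice of a fresh variable (exists when the variable type is infinite and S finite).\<close>
definition fresh :: "'v set \<Rightarrow> 'v" where
  "fresh S = (SOME y. y \<notin> S)"

primrec substN :: "('v \<Rightarrow> ('a, 'v) nexp) \<Rightarrow> ('a, 'v) nexp \<Rightarrow> ('a, 'v) nexp"
  and substP :: "('v \<Rightarrow> ('a, 'v) nexp) \<Rightarrow> ('a, 'v) pexp \<Rightarrow> ('a, 'v) pexp" where
  "substN \<sigma> Zero = Zero"
| "substN \<sigma> (V X) = \<sigma> X"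
| "substN \<sigma> (Pre a P) = Pre a (substP \<sigma> P)"
| "substN \<sigma> (Rec X E) =
     (let Y = fresh (\<Union>z \<in> fvN E - {X}. fvN (\<sigma> z))
      in Rec Y (substN (\<sigma>(X := V Y)) E))"
| "substN \<sigma> (Plus E F) = Plus (substN \<sigma> E) (substN \<sigma> F)"
| "substP \<sigma> (Dirac E) = Dirac (substN \<sigma> E)"
| "substP \<sigma> (PPlus P p Q) = PPlus (substP \<sigma> P) p (substP \<sigma> Q)"

definition subst1 :: "('a, 'v) nexp \<Rightarrow> 'v \<Rightarrow> ('a, 'v) nexp \<Rightarrow> ('a, 'v) nexp" where
  "subst1 E X F = substN (V(X := F)) E"

text \<open>Iterated probabilistic choice over a list of (probability, expression) pairs;
  the first argument is the remaining probability mass.\<close>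
fun pbig_aux :: "real \<Rightarrow> (real \<times> ('a, 'v) pexp) list \<Rightarrow> ('a, 'v) pexp" where
  "pbig_aux c [] = Dirac Zero"
| "pbig_aux c [(p, P)] = P"
| "pbig_aux c ((p, P) # x # xs) = PPlus P (Abs_prob (p / c)) (pbig_aux (c - p) (x # xs))"

definition pbig :: "(real \<times> ('a, 'v) pexp) list \<Rightarrow> ('a, 'v) pexp" where
  "pbig xs = pbig_aux 1 xs"

definition distr :: "real list \<Rightarrow> bool" where
  "distr ps \<longleftrightarrow> ps \<noteq> [] \<and> (\<forall>p \<in> set ps. 0 < p) \<and> sum_list ps = 1"

fun nsum :: "('a, 'v) nexp list \<Rightarrow> ('a, 'v) nexp" where
  "nsum [] = Zero"
| "nsum [E] = E"
| "nsum (E # F # Es) = Plus E (nsum (F # Es))"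

section \<open>Probabilistic unguardedness  E |> V\<close>

inductive ungN :: "('a, 'v) nexp \<Rightarrow> 'v set \<Rightarrow> bool"
  and ungP :: "('a, 'v) pexp \<Rightarrow> 'v set \<Rightarrow> bool" where
  ung_var: "ungN (V X) {X}"
| ung_tau: "ungP P W \<Longrightarrow> ungN (Pre Tau P) W"
| ung_rec: "ungN E W \<Longrightarrow> W \<noteq> {Y} \<Longrightarrow> ungN (Rec Y E) (W - {Y})"
| ung_plusL: "ungN E W \<Longrightarrow> ungN (Plus E F) W"
| ung_plusR: "ungN F W \<Longrightarrow> ungN (Plus E F) W"
| ung_dirac: "ungN E W \<Longrightarrow> ungP (Dirac E) W"
| ung_pplus: "ungP P W \<Longrightarrow> ungP Q W' \<Longrightarrow> ungP (PPlus P p Q) (W \<union> W')"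

inductive eqN :: "('a, 'v) nexp \<Rightarrow> ('a, 'v) nexp \<Rightarrow> bool"
  and eqP :: "('a, 'v) pexp \<Rightarrow> ('a, 'v) pexp \<Rightarrow> bool" where
  reflN: "eqN E E"
| symN: "eqN E F \<Longrightarrow> eqN F E"
| transN: "eqN E F \<Longrightarrow> eqN F G \<Longrightarrow> eqN E G"
| reflP: "eqP P P"
| symP: "eqP P Q \<Longrightarrow> eqP Q P"
| transP: "eqP P Q \<Longrightarrow> eqP Q R \<Longrightarrow> eqP P R"
| cong_pre: "eqP P Q \<Longrightarrow> eqN (Pre a P) (Pre a Q)"
| cong_rec: "eqN E F \<Longrightarrow> eqN (Rec X E) (Rec X F)"
| cong_plus: "eqN E E' \<Longrightarrow> eqN F F' \<Longrightarrow> eqN (Plus E F) (Plus E' F')"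
| cong_dirac: "eqN E F \<Longrightarrow> eqP (Dirac E) (Dirac F)"
| cong_pplus: "eqP P P' \<Longrightarrow> eqP Q Q' \<Longrightarrow> eqP (PPlus P p Q) (PPlus P' p Q')"
| alpha: "Y \<notin> fvN (Rec X E) \<Longrightarrow> eqN (Rec X E) (Rec Y (subst1 E X (V Y)))"
| N1: "eqN (Plus E F) (Plus F E)"
| N2: "eqN (Plus E (Plus F G)) (Plus (Plus E F) G)"
| N3: "eqN (Plus E E) E"
| N4: "eqN (Plus E Zero) E"
| P1: "eqP (PPlus P p Q) (PPlus Q (Abs_prob (1 - Rep_prob p)) P)"
| P2: "0 < p \<Longrightarrow> 0 < q \<Longrightarrow> p + q < 1 \<Longrightarrow>
       eqP (PPlus P (Abs_prob p) (PPlus Q (Abs_prob (q / (1 - p))) R))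
           (PPlus (PPlus P (Abs_prob (p / (p + q))) Q) (Abs_prob (p + q)) R)"
| P3: "eqP (PPlus P p P) P"
| T1: "eqN (Pre a (PPlus (Dirac (Pre Tau (Dirac E))) p P)) (Pre a (PPlus (Dirac E) p P))"
| T2: "distr (map fst xs) \<Longrightarrow>
       eqN (Plus (Pre Tau (pbig (map (\<lambda>(p, E). (p, Dirac (Plus E F))) xs))) F)
           (Pre Tau (pbig (map (\<lambda>(p, E). (p, Dirac (Plus E F))) xs)))"
| T3: "distr (map fst xs) \<Longrightarrow>
       eqN (Plus (Pre Tau (pbig (map (\<lambda>(p, E, P). (p, Dirac (Plus E (Pre a P)))) xs)))
                 (Pre a (pbig (map (\<lambda>(p, E, P). (p, P)) xs))))
           (Pre Tau (pbig (map (\<lambda>(p, E, P). (p, Dirac (Plus E (Pre a P)))) xs)))"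
| T4: "distr (map fst xs) \<Longrightarrow>
       eqN (Plus (Pre a (pbig (map (\<lambda>(p, E, P). (p, Dirac (Plus E (Pre Tau P)))) xs)))
                 (Pre a (pbig (map (\<lambda>(p, E, P). (p, P)) xs))))
           (Pre a (pbig (map (\<lambda>(p, E, P). (p, Dirac (Plus E (Pre Tau P)))) xs)))"
| C: "eqN (Plus (Pre a P) (Pre a Q))
          (Plus (Plus (Pre a P) (Pre a (PPlus P p Q))) (Pre a Q))"
| R1: "eqN (Rec X E) (subst1 E X (Rec X E))"
| R2: "eqN F (subst1 E X F) \<Longrightarrow> \<not> ungN E {X} \<Longrightarrow> eqN F (Rec X E)"
| R3: "eqN (Rec X (Plus (Pre Tau (PPlus (Dirac (Plus (V X) E)) p P)) F))
           (Rec X (Plus (Plus (Pre Tau (PPlus (Dirac (Plus (V X) E)) p P)) (Pre Tau P)) F))"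
| R4: "eqN (Rec X (Plus (V X) E)) (Rec X E)"
| R5: "eqN (Rec X (Plus (Pre Tau (Dirac (V X))) E)) (Rec X (Pre Tau (Dirac E)))"
| R6: "distr (map fst xs) \<Longrightarrow>
       eqN (Rec X (Plus (Pre Tau (pbig (map (\<lambda>(p, E). (p, Dirac (Plus (V X) E))) xs))) F))
           (Rec X (Plus (Plus (Pre Tau (Dirac (V X))) (nsum (map snd xs))) F))"

end

theory Submission
  imports Defs
begin

(* By induction on the derivation of E |> W, every unguarded E has a provable summand exposing
   W: either W = {Z} and E = E + Z, or E = E + tau.(+)_i q_i d(Z_i + E_i) with {Z_i} = W
   (writing d for Dirac).
   Variables and sums are immediate. For tau.P with P = (+)_i p_i d(E_i), each tau.d(E_i) has such
   a tau-summand tau.Q_i (using T2 in the second case); under the prefix T1 turns every branch d(E_i)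
   into d(tau.d(E_i) + tau.Q_i), T3 then exposes tau.(+)_i p_i Q_i, and this nested choice
   flattens into a single one. For rec Y.E, repeated use of R3 adds the tau-choice of the branches
   with Z_i distinct from Y to the body, and unfolding with R1 makes it a summand of rec Y.E.
   Finally, if W = {X} then every branch is d(X + E_i), and T2 absorbs X. *)

declare transN[trans] transP[trans]

section \<open>Weighted probabilistic choice\<close>

abbreviation weight :: "(real \<times> 'b) list \<Rightarrow> real" where
  "weight l \<equiv> sum_list (map fst l)"

definition pos_weights :: "(real \<times> 'b) list \<Rightarrow> bool" where
  "pos_weights l \<longleftrightarrow> l \<noteq> [] \<and> (\<forall>x\<in>set l. 0 < fst x)"

definition scale_weights :: "real \<Rightarrow> (real \<times> 'b) list \<Rightarrow> (real \<times> 'b) list" where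
  "scale_weights k l = map (apfst ((*) k)) l"

(* Like pbig, but the weights need not sum to 1, so that sublists and rescalings of a choice
   are again choices. *)
definition wchoice :: "(real \<times> ('a, 'v) pexp) list \<Rightarrow> ('a, 'v) pexp" where
  "wchoice l = pbig_aux (weight l) l"

lemma weight_pos:
  assumes "pos_weights l"
  shows "0 < weight l"
proof -
  obtain x xs where l: "l = x # xs" using assms by (cases l) (auto simp: pos_weights_def)
  have "0 \<le> weight xs"
    using assms l by (intro sum_list_nonneg) (auto simp: pos_weights_def less_imp_le)
  moreover have "0 < fst x" using assms l by (simp add: pos_weights_def)
  ultimately show ?thesis by (simp add: l)
qed

lemma pos_weights_scale_weights: "0 < k \<Longrightarrow> pos_weights l \<Longrightarrow> pos_weights (scale_weights k l)"
  by (auto simp: pos_weights_def scale_weights_def)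

lemma pos_weights_concat:
  "Ls \<noteq> [] \<Longrightarrow> \<forall>l\<in>set Ls. pos_weights l \<Longrightarrow> pos_weights (concat Ls)"
  by (cases Ls) (auto simp: pos_weights_def)

lemma weight_scale_weights [simp]: "weight (scale_weights k l) = k * weight l"
  by (induction l) (auto simp: scale_weights_def distrib_left)

definition wflatten :: "(real \<times> (real \<times> 'b) list) list \<Rightarrow> (real \<times> 'b) list" where
  "wflatten Ls = concat (map (\<lambda>(w, l). scale_weights (w / weight l) l) Ls)"

lemma weight_wflatten:
  assumes "\<forall>(w, l)\<in>set Ls. pos_weights l"
  shows "weight (wflatten Ls) = weight Ls"
proof -
  have "\<forall>(w, l)\<in>set Ls. 0 < weight l" using assms weight_pos by auto
  then show ?thesis unfolding wflatten_def by (induction Ls) auto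
qed

lemma pos_weights_wflatten:
  assumes "pos_weights Ls" "\<forall>(w, l)\<in>set Ls. pos_weights l"
  shows "pos_weights (wflatten Ls)"
proof -
  have "pos_weights (scale_weights (w / weight l) l)" if "(w, l) \<in> set Ls" for w l
  proof -
    have "0 < w" "pos_weights l" using assms that by (auto simp: pos_weights_def)
    then show ?thesis by (simp add: pos_weights_scale_weights weight_pos)
  qed
  then show ?thesis
    using assms(1) unfolding wflatten_def pos_weights_def[of Ls] by (intro pos_weights_concat) auto
qed

lemma fst_comp_map_snd [simp]: "fst \<circ> (\<lambda>(p, x). (p, f x)) = fst"
  by auto

lemma map_scale_weights:
  "map (\<lambda>(p, x). (p, f x)) (scale_weights k l) = scale_weights k (map (\<lambda>(p, x). (p, f x)) l)"
  by (simp add: scale_weights_def split_def)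

lemma pbig_aux_scale_weights:
  "0 < k \<Longrightarrow> pbig_aux (k * c) (scale_weights k l) = pbig_aux c l"
proof (induction c l rule: pbig_aux.induct)
  case (3 c p P x xs)
  then show ?case
    by (cases x) (simp add: scale_weights_def right_diff_distrib[symmetric])
qed (auto simp: scale_weights_def)

lemma wchoice_scale_weights [simp]: "0 < k \<Longrightarrow> wchoice (scale_weights k l) = wchoice l"
  by (simp add: wchoice_def pbig_aux_scale_weights)

lemma wchoice_single [simp]: "wchoice [(p, P)] = P"
  by (simp add: wchoice_def)

lemma wchoice_Cons:
  "l \<noteq> [] \<Longrightarrow> wchoice ((p, P) # l) = PPlus P (Abs_prob (p / (p + weight l))) (wchoice l)"
  by (cases l) (auto simp: wchoice_def)

lemma pbig_aux_cong:
  "list_all2 (\<lambda>(p, P) (q, Q). p = q \<and> eqP P Q) l l' \<Longrightarrow> eqP (pbig_aux c l) (pbig_aux c l')"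
proof (induction l l' arbitrary: c rule: list_all2_induct)
  case Nil
  then show ?case by (simp add: reflP)
next
  case (Cons x x' l l')
  then show ?case
    by (cases x; cases x'; cases l; cases l') (auto intro: cong_pplus)
qed

lemma wchoice_cong:
  assumes "list_all2 (\<lambda>(p, P) (q, Q). p = q \<and> eqP P Q) l l'"
  shows "eqP (wchoice l) (wchoice l')"
proof -
  have "map fst l = map fst l'"
    using assms by (induction l l' rule: list_all2_induct) auto
  then show ?thesis using pbig_aux_cong[OF assms] by (simp add: wchoice_def)
qed

lemma PPlus_commute_weights:
  fixes a b :: real
  assumes "0 < a" "0 < b"
  shows "eqP (PPlus P (Abs_prob (a / (a + b))) Q) (PPlus Q (Abs_prob (b / (b + a))) P)"
proof -
  have "1 - Rep_prob (Abs_prob (a / (a + b))) = b / (b + a)"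
    using assms by (simp add: Abs_prob_inverse field_simps)
  then show ?thesis using P1[of P "Abs_prob (a / (a + b))" Q] by simp
qed

lemma PPlus_assoc_weights:
  fixes a b c :: real
  assumes "0 < a" "0 < b" "0 < c"
  shows "eqP (PPlus P (Abs_prob (a / (a + (b + c)))) (PPlus Q (Abs_prob (b / (b + c))) R))
             (PPlus (PPlus P (Abs_prob (a / (a + b))) Q) (Abs_prob ((a + b) / (a + b + c))) R)"
proof -
  define p q where "p = a / (a + b + c)" and "q = b / (a + b + c)"
  have s: "0 < a + b + c" using assms by simp
  have p: "1 - p = (b + c) / (a + b + c)" using s by (simp add: p_def field_simps)
  have pq: "p + q = (a + b) / (a + b + c)" by (simp add: p_def q_def add_divide_distrib)
  have q': "q / (1 - p) = b / (b + c)" using s by (simp add: p q_def)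
  have p': "p / (p + q) = a / (a + b)" unfolding pq using s by (simp add: p_def)
  have "0 < p" "0 < q" using assms by (simp_all add: p_def q_def)
  moreover have "p + q < 1" unfolding pq using assms by simp
  ultimately have "eqP (PPlus P (Abs_prob p) (PPlus Q (Abs_prob (q / (1 - p))) R))
      (PPlus (PPlus P (Abs_prob (p / (p + q))) Q) (Abs_prob (p + q)) R)"
    by (rule P2)
  then show ?thesis unfolding q' p' unfolding pq by (simp only: p_def add.assoc)
qed

lemma wchoice_append:
  assumes "pos_weights xs" "pos_weights ys"
  shows "eqP (wchoice (xs @ ys))
             (PPlus (wchoice xs) (Abs_prob (weight xs / (weight xs + weight ys))) (wchoice ys))"
  using assms(1)
proof (induction xs)
  case Nil
  then show ?case by (simp add: pos_weights_def)
next
  case (Cons x xs)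
  obtain p P where x: "x = (p, P)" by fastforce
  have "0 < p" "ys \<noteq> []" "0 < weight ys"
    using Cons.prems assms(2) x weight_pos by (auto simp: pos_weights_def)
  show ?case
  proof (cases "xs = []")
    case True
    then show ?thesis using x \<open>ys \<noteq> []\<close> by (simp add: wchoice_Cons reflP)
  next
    case False
    then have xs: "pos_weights xs" using Cons.prems by (simp add: pos_weights_def)
    have "wchoice (x # xs @ ys)
          = PPlus P (Abs_prob (p / (p + (weight xs + weight ys)))) (wchoice (xs @ ys))"
      using x False by (simp add: wchoice_Cons)
    also have "eqP \<dots> (PPlus P (Abs_prob (p / (p + (weight xs + weight ys))))
        (PPlus (wchoice xs) (Abs_prob (weight xs / (weight xs + weight ys))) (wchoice ys)))"
      by (rule cong_pplus[OF reflP Cons.IH[OF xs]])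
    also have "eqP \<dots> (PPlus (PPlus P (Abs_prob (p / (p + weight xs))) (wchoice xs))
        (Abs_prob ((p + weight xs) / (p + weight xs + weight ys))) (wchoice ys))"
      using \<open>0 < p\<close> weight_pos[OF xs] \<open>0 < weight ys\<close> by (rule PPlus_assoc_weights)
    also have "\<dots> = PPlus (wchoice (x # xs))
        (Abs_prob (weight (x # xs) / (weight (x # xs) + weight ys))) (wchoice ys)"
      using x False by (simp add: wchoice_Cons)
    finally show ?thesis by (simp only: append_Cons)
  qed
qed

lemma wchoice_append_commute:
  assumes "pos_weights xs" "pos_weights ys"
  shows "eqP (wchoice (xs @ ys)) (wchoice (ys @ xs))"
proof -
  have "eqP (wchoice (xs @ ys))
      (PPlus (wchoice xs) (Abs_prob (weight xs / (weight xs + weight ys))) (wchoice ys))"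
    using assms by (rule wchoice_append)
  also have "eqP \<dots> (PPlus (wchoice ys) (Abs_prob (weight ys / (weight ys + weight xs))) (wchoice xs))"
    using weight_pos[OF assms(1)] weight_pos[OF assms(2)] by (rule PPlus_commute_weights)
  also have "eqP \<dots> (wchoice (ys @ xs))"
    by (rule symP[OF wchoice_append[OF assms(2,1)]])
  finally show ?thesis .
qed

lemma wchoice_move_to_front:
  assumes "pos_weights (xs @ x # ys)"
  shows "eqP (wchoice (xs @ x # ys)) (wchoice (x # xs @ ys))"
proof (cases "xs = []")
  case True
  then show ?thesis by (simp add: reflP)
next
  case False
  then have xs: "pos_weights xs" "pos_weights [x]" "pos_weights (xs @ [x])" "pos_weights ([x] @ xs)"
    using assms by (auto simp: pos_weights_def)
  show ?thesis
  proof (cases "ys = []")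
    case True
    then show ?thesis using wchoice_append_commute[OF xs(1,2)] by simp
  next
    case False
    then have ys: "pos_weights ys" using assms by (simp add: pos_weights_def)
    have w: "weight (xs @ [x]) = weight ([x] @ xs)" by simp
    have "eqP (wchoice ((xs @ [x]) @ ys)) (PPlus (wchoice (xs @ [x]))
        (Abs_prob (weight (xs @ [x]) / (weight (xs @ [x]) + weight ys))) (wchoice ys))"
      using xs(3) ys by (rule wchoice_append)
    also have "eqP \<dots> (PPlus (wchoice ([x] @ xs))
        (Abs_prob (weight ([x] @ xs) / (weight ([x] @ xs) + weight ys))) (wchoice ys))"
      unfolding w by (rule cong_pplus[OF wchoice_append_commute[OF xs(1,2)] reflP])
    also have "eqP \<dots> (wchoice (([x] @ xs) @ ys))"
      by (rule symP[OF wchoice_append[OF xs(4) ys]])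
    finally show ?thesis by (simp only: append_assoc append_Cons append_Nil)
  qed
qed

lemma wchoice_wflatten:
  assumes "pos_weights Ls" "\<forall>(w, l)\<in>set Ls. pos_weights l"
  shows "eqP (wchoice (map (\<lambda>(w, l). (w, wchoice l)) Ls)) (wchoice (wflatten Ls))"
  using assms
proof (induction Ls)
  case Nil
  then show ?case by (simp add: pos_weights_def)
next
  case (Cons wl Ls)
  obtain w l where wl: "wl = (w, l)" by fastforce
  have "0 < w" "pos_weights l" using Cons.prems wl by (auto simp: pos_weights_def)
  then have "0 < w / weight l" using weight_pos[of l] by simp
  show ?case
  proof (cases "Ls = []")
    case True
    then show ?thesis using wl \<open>0 < w / weight l\<close> by (simp add: wflatten_def reflP)
  next
    case False
    let ?S = "scale_weights (w / weight l) l"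
    have Ls: "pos_weights Ls" "\<forall>(w, l)\<in>set Ls. pos_weights l"
      using Cons.prems False by (auto simp: pos_weights_def)
    have S: "pos_weights ?S"
      using \<open>0 < w / weight l\<close> \<open>pos_weights l\<close> by (rule pos_weights_scale_weights)
    have app: "eqP (wchoice (?S @ wflatten Ls))
        (PPlus (wchoice ?S) (Abs_prob (w / (w + weight Ls))) (wchoice (wflatten Ls)))"
      using wchoice_append[OF S pos_weights_wflatten[OF Ls]] weight_pos[OF \<open>pos_weights l\<close>]
      by (simp add: weight_wflatten[OF Ls(2)])
    have "wchoice (map (\<lambda>(w, l). (w, wchoice l)) (wl # Ls))
        = PPlus (wchoice l) (Abs_prob (w / (w + weight Ls))) (wchoice (map (\<lambda>(w, l). (w, wchoice l)) Ls))"
      using wl False by (simp add: wchoice_Cons split_def o_def)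
    also have "eqP \<dots> (PPlus (wchoice ?S) (Abs_prob (w / (w + weight Ls))) (wchoice (wflatten Ls)))"
      using cong_pplus[OF reflP Cons.IH[OF Ls]] \<open>0 < w / weight l\<close> by simp
    also have "eqP \<dots> (wchoice (?S @ wflatten Ls))" by (rule symP[OF app])
    finally show ?thesis using wl by (simp add: wflatten_def)
  qed
qed

lemma distr_normalise:
  assumes "pos_weights l"
  shows "distr (map fst (scale_weights (1 / weight l) l))"
proof -
  have "0 < weight l" using assms by (rule weight_pos)
  then have "weight (scale_weights (1 / weight l) l) = 1" by simp
  moreover have "pos_weights (scale_weights (1 / weight l) l)"
    using \<open>0 < weight l\<close> assms by (simp add: pos_weights_scale_weights)
  ultimately show ?thesis by (auto simp: distr_def pos_weights_def)
qed

lemma pbig_normalise: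
  assumes "pos_weights l"
  shows "pbig (scale_weights (1 / weight l) l) = wchoice l"
proof -
  have "0 < weight l" using assms by (rule weight_pos)
  then have "pbig (scale_weights (1 / weight l) l) = wchoice (scale_weights (1 / weight l) l)"
    by (simp add: pbig_def wchoice_def)
  then show ?thesis using \<open>0 < weight l\<close> by simp
qed

lemma substP_wchoice: "substP \<sigma> (wchoice l) = wchoice (map (\<lambda>(p, P). (p, substP \<sigma> P)) l)"
proof -
  have "substP \<sigma> (pbig_aux c l) = pbig_aux c (map (\<lambda>(p, P). (p, substP \<sigma> P)) l)" for c
    by (induction c l rule: pbig_aux.induct) auto
  then show ?thesis by (simp add: wchoice_def)
qed

section \<open>Absorbed summands\<close>

definition absorbs :: "('a, 'v) nexp \<Rightarrow> ('a, 'v) nexp \<Rightarrow> bool" where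
  "absorbs E F \<longleftrightarrow> eqN E (Plus E F)"

lemma absorbs_cong: "eqN E E' \<Longrightarrow> eqN F F' \<Longrightarrow> absorbs E F \<Longrightarrow> absorbs E' F'"
  unfolding absorbs_def by (meson cong_plus symN transN)

lemma absorbs_refl: "absorbs E E"
  unfolding absorbs_def by (rule symN[OF N3])

lemma absorbs_if_eqN_Plus:
  assumes "eqN E (Plus G F)"
  shows "absorbs E F"
proof -
  have "eqN E (Plus G (Plus F F))" by (rule transN[OF assms cong_plus[OF reflN symN[OF N3]]])
  also have "eqN \<dots> (Plus (Plus G F) F)" by (rule N2)
  also have "eqN \<dots> (Plus E F)" by (rule cong_plus[OF symN[OF assms] reflN])
  finally show ?thesis unfolding absorbs_def .
qed

lemma absorbs_Plus_right: "absorbs (Plus E F) F"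
  by (rule absorbs_if_eqN_Plus[OF reflN])

lemma Plus_right_commute: "eqN (Plus (Plus E F) G) (Plus (Plus E G) F)"
proof -
  have "eqN (Plus (Plus E F) G) (Plus E (Plus F G))" by (rule symN[OF N2])
  also have "eqN \<dots> (Plus E (Plus G F))" by (rule cong_plus[OF reflN N1])
  also have "eqN \<dots> (Plus (Plus E G) F)" by (rule N2)
  finally show ?thesis .
qed

lemma absorbs_PlusI1:
  assumes "absorbs E T"
  shows "absorbs (Plus E F) T"
proof -
  have "eqN (Plus E F) (Plus (Plus E T) F)"
    using assms unfolding absorbs_def by (rule cong_plus[OF _ reflN])
  also have "eqN \<dots> (Plus (Plus E F) T)" by (rule Plus_right_commute)
  finally show ?thesis unfolding absorbs_def .
qed

lemma absorbs_PlusI2: "absorbs E T \<Longrightarrow> absorbs (Plus F E) T"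
  by (rule absorbs_cong[OF N1 reflN absorbs_PlusI1])

lemma absorbs_trans:
  assumes EF: "absorbs E F" and FG: "absorbs F G"
  shows "absorbs E G"
proof -
  have "eqN E (Plus E F)" using EF unfolding absorbs_def .
  also have "eqN \<dots> (Plus E (Plus F G))"
    using FG unfolding absorbs_def by (rule cong_plus[OF reflN])
  also have "eqN \<dots> (Plus (Plus E F) G)" by (rule N2)
  also have "eqN \<dots> (Plus E G)"
    using EF unfolding absorbs_def by (rule cong_plus[OF symN reflN])
  finally show ?thesis unfolding absorbs_def .
qed

lemma T2_wchoice:
  assumes "pos_weights xs"
  shows "absorbs (Pre Tau (wchoice (map (\<lambda>(p, E). (p, Dirac (Plus E F))) xs))) F"
proof -
  let ?l = "map (\<lambda>(p, E). (p, Dirac (Plus E F))) xs"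
  have l: "pos_weights ?l" using assms by (auto simp: pos_weights_def)
  let ?ys = "scale_weights (1 / weight xs) xs"
  have "distr (map fst ?ys)" using assms by (rule distr_normalise)
  then have "eqN (Plus (Pre Tau (pbig (map (\<lambda>(p, E). (p, Dirac (Plus E F))) ?ys))) F)
      (Pre Tau (pbig (map (\<lambda>(p, E). (p, Dirac (Plus E F))) ?ys)))"
    by (rule T2)
  moreover have "pbig (map (\<lambda>(p, E). (p, Dirac (Plus E F))) ?ys) = wchoice ?l"
    using pbig_normalise[OF l] by (simp add: map_scale_weights)
  ultimately show ?thesis unfolding absorbs_def by (metis symN)
qed

lemma T3_wchoice:
  assumes "pos_weights xs"
  shows "absorbs (Pre Tau (wchoice (map (\<lambda>(p, E, P). (p, Dirac (Plus E (Pre a P)))) xs)))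
                 (Pre a (wchoice (map (\<lambda>(p, E, P). (p, P)) xs)))"
proof -
  let ?f = "\<lambda>(p, E, P). (p, Dirac (Plus E (Pre a P)))" and ?g = "\<lambda>(p, E, P). (p, P)"
  let ?c = "1 / weight xs"
  have pos: "pos_weights (map ?f xs)" "pos_weights (map ?g xs)"
    using assms by (auto simp: pos_weights_def)
  have w: "weight (map ?f xs) = weight xs" "weight (map ?g xs) = weight xs"
    by (induction xs) auto
  have "map ?f (scale_weights ?c xs) = scale_weights ?c (map ?f xs)"
       "map ?g (scale_weights ?c xs) = scale_weights ?c (map ?g xs)"
    by (simp_all add: scale_weights_def split_def)
  then have "pbig (map ?f (scale_weights ?c xs)) = wchoice (map ?f xs)"
            "pbig (map ?g (scale_weights ?c xs)) = wchoice (map ?g xs)"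
    using pbig_normalise[OF pos(1)] pbig_normalise[OF pos(2)] by (simp_all only: w)
  moreover have "eqN (Plus (Pre Tau (pbig (map ?f (scale_weights ?c xs))))
                            (Pre a (pbig (map ?g (scale_weights ?c xs)))))
                      (Pre Tau (pbig (map ?f (scale_weights ?c xs))))"
    using distr_normalise[OF assms] by (rule T3)
  ultimately show ?thesis unfolding absorbs_def by (metis symN)
qed

lemma Pre_Dirac_tau: "eqN (Pre a (Dirac E)) (Pre a (Dirac (Pre Tau (Dirac E))))"
proof -
  define h where "h = Abs_prob (1 / 2)"
  have "eqN (Pre a (Dirac E)) (Pre a (PPlus (Dirac E) h (Dirac E)))" by (rule cong_pre[OF symP[OF P3]])
  also have "eqN \<dots> (Pre a (PPlus (Dirac (Pre Tau (Dirac E))) h (Dirac E)))" by (rule symN[OF T1])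
  also have "eqN \<dots> (Pre a (PPlus (Dirac E) (Abs_prob (1 - Rep_prob h)) (Dirac (Pre Tau (Dirac E)))))"
    by (rule cong_pre[OF P1])
  also have "eqN \<dots> (Pre a (PPlus (Dirac (Pre Tau (Dirac E))) (Abs_prob (1 - Rep_prob h)) (Dirac (Pre Tau (Dirac E)))))"
    by (rule symN[OF T1])
  also have "eqN \<dots> (Pre a (Dirac (Pre Tau (Dirac E))))" by (rule cong_pre[OF P3])
  finally show ?thesis .
qed

lemma Pre_wchoice_tau_at:
  assumes "pos_weights (xs @ (p, Dirac E) # ys)"
  shows "eqN (Pre a (wchoice (xs @ (p, Dirac E) # ys)))
             (Pre a (wchoice (xs @ (p, Dirac (Pre Tau (Dirac E))) # ys)))"
proof -
  have front: "eqN (Pre a (wchoice ((p, Dirac E) # zs))) (Pre a (wchoice ((p, Dirac (Pre Tau (Dirac E))) # zs)))"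
    for zs :: "(real \<times> ('a, 'b) pexp) list"
    by (cases "zs = []") (simp_all add: Pre_Dirac_tau wchoice_Cons symN[OF T1])
  have pos': "pos_weights (xs @ (p, Dirac (Pre Tau (Dirac E))) # ys)"
    using assms by (auto simp: pos_weights_def)
  have "eqN (Pre a (wchoice (xs @ (p, Dirac E) # ys))) (Pre a (wchoice ((p, Dirac E) # xs @ ys)))"
    by (rule cong_pre[OF wchoice_move_to_front[OF assms]])
  also have "eqN \<dots> (Pre a (wchoice ((p, Dirac (Pre Tau (Dirac E))) # xs @ ys)))"
    by (rule front)
  also have "eqN \<dots> (Pre a (wchoice (xs @ (p, Dirac (Pre Tau (Dirac E))) # ys)))"
    by (rule cong_pre[OF symP[OF wchoice_move_to_front[OF pos']]])
  finally show ?thesis .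
qed

lemma Pre_wchoice_tau:
  assumes "pos_weights l"
  shows "eqN (Pre a (wchoice (map (\<lambda>(p, E). (p, Dirac E)) l)))
             (Pre a (wchoice (map (\<lambda>(p, E). (p, Dirac (Pre Tau (Dirac E)))) l)))"
proof -
  have "eqN (Pre a (wchoice (xs @ map (\<lambda>(p, E). (p, Dirac E)) l)))
            (Pre a (wchoice (xs @ map (\<lambda>(p, E). (p, Dirac (Pre Tau (Dirac E)))) l)))"
    if "pos_weights (xs @ map (\<lambda>(p, E). (p, Dirac E)) l)" for xs
    using that
  proof (induction l arbitrary: xs)
    case Nil
    then show ?case by (simp add: reflN)
  next
    case (Cons x l)
    obtain p E where x: "x = (p, E)" by fastforce
    have "pos_weights ((xs @ [(p, Dirac (Pre Tau (Dirac E)))]) @ map (\<lambda>(p, E). (p, Dirac E)) l)"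
      using Cons.prems x by (auto simp: pos_weights_def)
    note IH = Cons.IH[OF this]
    have "eqN (Pre a (wchoice (xs @ map (\<lambda>(p, E). (p, Dirac E)) (x # l))))
        (Pre a (wchoice (xs @ (p, Dirac (Pre Tau (Dirac E))) # map (\<lambda>(p, E). (p, Dirac E)) l)))"
      using Pre_wchoice_tau_at Cons.prems x by simp
    also have "eqN \<dots> (Pre a (wchoice (xs @ map (\<lambda>(p, E). (p, Dirac (Pre Tau (Dirac E)))) (x # l))))"
      using IH x by simp
    finally show ?case .
  qed
  moreover have "pos_weights (map (\<lambda>(p, E). (p, Dirac E)) l)"
    using assms by (auto simp: pos_weights_def)
  ultimately show ?thesis by (metis append_Nil)
qed

section \<open>Choices of branches exposing variables\<close>

definition leaf :: "real \<times> 'v \<times> ('a, 'v) nexp \<Rightarrow> real \<times> ('a, 'v) pexp" where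
  "leaf = (\<lambda>(q, Z, E). (q, Dirac (Plus (V Z) E)))"

definition tau_leaves :: "(real \<times> 'v \<times> ('a, 'v) nexp) list \<Rightarrow> ('a, 'v) nexp" where
  "tau_leaves L = Pre Tau (wchoice (map leaf L))"

definition leaf_vars :: "(real \<times> 'v \<times> ('a, 'v) nexp) list \<Rightarrow> 'v set" where
  "leaf_vars L = (\<lambda>(q, Z, E). Z) ` set L"

lemma leaf_simp [simp]: "leaf (q, Z, E) = (q, Dirac (Plus (V Z) E))"
  by (simp add: leaf_def)

lemma fst_leaf [simp]: "fst (leaf x) = fst x"
  by (simp add: leaf_def split_def)

lemma fst_comp_leaf [simp]: "fst \<circ> leaf = fst"
  by auto

lemma pos_weights_map_leaf [simp]: "pos_weights (map leaf L) = pos_weights L"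
  by (auto simp: pos_weights_def leaf_def split_def)

lemma map_leaf_scale_weights: "map leaf (scale_weights k L) = scale_weights k (map leaf L)"
  by (simp add: scale_weights_def leaf_def split_def)

lemma leaf_vars_scale_weights [simp]: "leaf_vars (scale_weights k L) = leaf_vars L"
  by (force simp: leaf_vars_def scale_weights_def)

lemma map_leaf_wflatten: "map leaf (wflatten Ls) = wflatten (map (\<lambda>(w, l). (w, map leaf l)) Ls)"
  by (simp add: wflatten_def map_concat map_leaf_scale_weights comp_def split_def)

lemma leaf_vars_concat: "leaf_vars (concat Ls) = (\<Union>L\<in>set Ls. leaf_vars L)"
  by (simp add: leaf_vars_def image_UN)

lemma leaf_vars_wflatten: "leaf_vars (wflatten Ls) = (\<Union>(w, L)\<in>set Ls. leaf_vars L)"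
  by (simp add: wflatten_def leaf_vars_concat split_def)

lemma substN_tau_leaves:
  assumes "\<forall>Z\<in>leaf_vars L. \<sigma> Z = V Z"
  shows "substN \<sigma> (tau_leaves L) = tau_leaves (map (\<lambda>(q, Z, E). (q, Z, substN \<sigma> E)) L)"
proof -
  have "map (\<lambda>(p, P). (p, substP \<sigma> P)) (map leaf L) = map leaf (map (\<lambda>(q, Z, E). (q, Z, substN \<sigma> E)) L)"
    using assms by (auto simp: leaf_vars_def)
  then show ?thesis unfolding tau_leaves_def substN.simps substP_wchoice by (rule arg_cong)
qed

lemma absorbs_Rec_unfold:
  assumes "eqN (Rec Y E) (Rec Y (Plus E T))"
  shows "absorbs (Rec Y E) (subst1 T Y (Rec Y (Plus E T)))"
proof -
  let ?G = "Rec Y (Plus E T)"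
  have "eqN ?G (Plus (subst1 E Y ?G) (subst1 T Y ?G))"
    using R1[of Y "Plus E T"] by (simp add: subst1_def)
  then have "absorbs ?G (subst1 T Y ?G)" by (rule absorbs_if_eqN_Plus)
  then show ?thesis by (rule absorbs_cong[OF symN[OF assms] reflN])
qed

lemma Rec_absorbs_R3:
  assumes "absorbs E (Pre Tau (PPlus (Dirac (Plus (V Y) E0)) p P))"
  shows "eqN (Rec Y E) (Rec Y (Plus E (Pre Tau P)))"
proof -
  let ?A = "Pre Tau (PPlus (Dirac (Plus (V Y) E0)) p P)"
  have E: "eqN E (Plus ?A E)" using assms N1 unfolding absorbs_def by (rule transN)
  have "eqN (Rec Y E) (Rec Y (Plus ?A E))" by (rule cong_rec[OF E])
  also have "eqN \<dots> (Rec Y (Plus (Plus ?A (Pre Tau P)) E))" by (rule R3)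
  also have "eqN \<dots> (Rec Y (Plus E (Pre Tau P)))"
    by (rule cong_rec[OF transN[OF Plus_right_commute cong_plus[OF symN[OF E] reflN]]])
  finally show ?thesis .
qed

lemma Rec_absorbs_filter:
  assumes "pos_weights L" "absorbs E (tau_leaves L)" "\<exists>(q, Z, E')\<in>set L. Z \<noteq> Y"
  shows "eqN (Rec Y E) (Rec Y (Plus E (tau_leaves (filter (\<lambda>(q, Z, E'). Z \<noteq> Y) L))))"
  using assms
proof (induction "length (filter (\<lambda>(q, Z, E'). Z = Y) L)" arbitrary: L E rule: less_induct)
  case less
  show ?case
  proof (cases "\<exists>(q, Z, E')\<in>set L. Z = Y")
    case False
    then have "filter (\<lambda>(q, Z, E'). Z \<noteq> Y) L = L" by (auto intro: filter_True)
    then show ?thesis using less.prems(2) by (simp add: absorbs_def cong_rec)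
  next
    case True
    then obtain q E0 where "(q, Y, E0) \<in> set L" by auto
    then obtain xs ys where L: "L = xs @ (q, Y, E0) # ys" by (meson split_list)
    let ?R = "xs @ ys"
    have "?R \<noteq> []" using less.prems(3) L by auto
    then have R: "pos_weights ?R" using less.prems(1) L by (auto simp: pos_weights_def)
    have "eqP (wchoice (map leaf L)) (wchoice (leaf (q, Y, E0) # map leaf ?R))"
    proof -
      have "pos_weights (map leaf xs @ leaf (q, Y, E0) # map leaf ys)"
        using less.prems(1) L by (force simp: pos_weights_def simp del: leaf_simp)
      then show ?thesis using wchoice_move_to_front L by simp
    qed
    also have "\<dots> = PPlus (Dirac (Plus (V Y) E0)) (Abs_prob (q / (q + weight ?R))) (wchoice (map leaf ?R))"
      using \<open>?R \<noteq> []\<close> by (simp add: wchoice_Cons del: map_append)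
    finally have A: "eqN (tau_leaves L) (Pre Tau (PPlus (Dirac (Plus (V Y) E0))
        (Abs_prob (q / (q + weight ?R))) (wchoice (map leaf ?R))))"
      unfolding tau_leaves_def by (rule cong_pre)
    have step: "eqN (Rec Y F) (Rec Y (Plus F (tau_leaves ?R)))" if "absorbs F (tau_leaves L)" for F
      unfolding tau_leaves_def by (rule Rec_absorbs_R3[OF absorbs_cong[OF reflN A that]])
    let ?Q = "tau_leaves (filter (\<lambda>(q, Z, E'). Z \<noteq> Y) L)"
    have Q: "?Q = tau_leaves (filter (\<lambda>(q, Z, E'). Z \<noteq> Y) ?R)" using L by simp
    have "length (filter (\<lambda>(q, Z, E'). Z = Y) ?R) < length (filter (\<lambda>(q, Z, E'). Z = Y) L)"
      using L by simp
    moreover have "\<exists>(q, Z, E')\<in>set ?R. Z \<noteq> Y" using less.prems(3) L by auto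
    ultimately have IH: "eqN (Rec Y (Plus E (tau_leaves ?R))) (Rec Y (Plus (Plus E (tau_leaves ?R)) ?Q))"
      using less.hyps[OF _ R absorbs_Plus_right] unfolding Q by blast
    have "eqN (Rec Y E) (Rec Y (Plus E (tau_leaves ?R)))" by (rule step[OF less.prems(2)])
    also note IH
    also have "eqN (Rec Y (Plus (Plus E (tau_leaves ?R)) ?Q)) (Rec Y (Plus (Plus E ?Q) (tau_leaves ?R)))"
      by (rule cong_rec[OF Plus_right_commute])
    also have "eqN \<dots> (Rec Y (Plus E ?Q))"
      by (rule symN[OF step[OF absorbs_PlusI1[OF less.prems(2)]]])
    finally show ?thesis .
  qed
qed

section \<open>Unguardedness yields an absorbed summand\<close>

definition ung_summand :: "('a, 'v) nexp \<Rightarrow> 'v set \<Rightarrow> bool" where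
  "ung_summand E W \<longleftrightarrow> (\<exists>Z. W = {Z} \<and> absorbs E (V Z)) \<or>
     (\<exists>L. pos_weights L \<and> leaf_vars L = W \<and> absorbs E (tau_leaves L))"

(* Stated for tau.d(E) rather than E: a variable summand Z of E only gives the tau-summand
   tau.d(Z + E) of tau.d(E), and under a prefix T1 makes the extra tau harmless. *)
definition ung_summandP :: "('a, 'v) pexp \<Rightarrow> 'v set \<Rightarrow> bool" where
  "ung_summandP P W \<longleftrightarrow> (\<exists>M. pos_weights M \<and>
     (\<forall>(p, E, L)\<in>set M. pos_weights L \<and> absorbs (Pre Tau (Dirac E)) (tau_leaves L)) \<and>
     (\<Union>(p, E, L)\<in>set M. leaf_vars L) = W \<and>
     eqP P (wchoice (map (\<lambda>(p, E, L). (p, Dirac E)) M)))"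

lemma ung_summandE:
  assumes "ung_summand E W"
  obtains (var) Z where "W = {Z}" "absorbs E (V Z)"
    | (leaves) L where "pos_weights L" "leaf_vars L = W" "absorbs E (tau_leaves L)"
  using assms unfolding ung_summand_def by blast

lemma fst_comp_Dirac_fst [simp]: "fst \<circ> (\<lambda>(p, E, L). (p, Dirac E)) = fst"
  by auto

lemma map_Dirac_fst_scale_weights:
  "map (\<lambda>(p, E, L). (p, Dirac E)) (scale_weights k M) = scale_weights k (map (\<lambda>(p, E, L). (p, Dirac E)) M)"
  by (simp add: scale_weights_def split_def)

lemma ung_summand_V: "ung_summand (V X) {X}"
  unfolding ung_summand_def using absorbs_refl by blast

lemma ung_summand_PlusI1: "ung_summand E W \<Longrightarrow> ung_summand (Plus E F) W"
  unfolding ung_summand_def using absorbs_PlusI1 by blast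

lemma ung_summand_PlusI2: "ung_summand E W \<Longrightarrow> ung_summand (Plus F E) W"
  unfolding ung_summand_def using absorbs_PlusI2 by blast

lemma Rec_absorbs_tau_leaves:
  assumes L: "pos_weights L" "absorbs E (tau_leaves L)" and Y: "\<exists>(q, Z, E')\<in>set L. Z \<noteq> Y"
  shows "\<exists>L'. pos_weights L' \<and> leaf_vars L' = leaf_vars L - {Y} \<and> absorbs (Rec Y E) (tau_leaves L')"
proof -
  let ?L = "filter (\<lambda>(q, Z, E'). Z \<noteq> Y) L"
  let ?G = "Rec Y (Plus E (tau_leaves ?L))"
  let ?L' = "map (\<lambda>(q, Z, E). (q, Z, subst1 E Y ?G)) ?L"
  have "eqN (Rec Y E) ?G" using L Y by (rule Rec_absorbs_filter)
  then have "absorbs (Rec Y E) (subst1 (tau_leaves ?L) Y ?G)" by (rule absorbs_Rec_unfold)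
  moreover have "subst1 (tau_leaves ?L) Y ?G = tau_leaves ?L'"
    unfolding subst1_def by (rule substN_tau_leaves) (auto simp: leaf_vars_def)
  moreover have "pos_weights ?L'"
  proof -
    have "?L \<noteq> []" using Y by (simp add: filter_empty_conv)
    then show ?thesis using L(1) by (auto simp: pos_weights_def split_def)
  qed
  moreover have "leaf_vars ?L' = leaf_vars L - {Y}" by (force simp: leaf_vars_def)
  ultimately show ?thesis by (intro exI[of _ ?L']) simp
qed

lemma ung_summand_Rec:
  assumes "ung_summand E W" "W \<noteq> {Y}"
  shows "ung_summand (Rec Y E) (W - {Y})"
  using assms(1)
proof (cases rule: ung_summandE)
  case (var Z)
  then have "eqN (Rec Y E) (Rec Y (Plus E (V Z)))" by (simp add: absorbs_def cong_rec)
  then have "absorbs (Rec Y E) (subst1 (V Z) Y (Rec Y (Plus E (V Z))))" by (rule absorbs_Rec_unfold)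
  moreover have "Z \<noteq> Y" using var assms(2) by auto
  ultimately show ?thesis using var by (simp add: subst1_def ung_summand_def)
next
  case (leaves L)
  have "\<exists>(q, Z, E')\<in>set L. Z \<noteq> Y"
  proof (rule ccontr)
    assume "\<not> ?thesis"
    then have "leaf_vars L \<subseteq> {Y}" by (auto simp: leaf_vars_def)
    moreover have "leaf_vars L \<noteq> {}" using leaves by (auto simp: leaf_vars_def pos_weights_def)
    ultimately show False using leaves assms(2) by blast
  qed
  then show ?thesis
    using Rec_absorbs_tau_leaves[OF leaves(1,3)] leaves(2) unfolding ung_summand_def by blast
qed

lemma tau_Dirac_absorbs_tau_leaves:
  assumes "ung_summand E W"
  obtains L where "pos_weights L" "leaf_vars L = W" "absorbs (Pre Tau (Dirac E)) (tau_leaves L)"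
  using assms
proof (cases rule: ung_summandE)
  case (var Z)
  have "pos_weights [(1::real, Z, E)]" "leaf_vars [(1::real, Z, E)] = W"
    using var by (simp_all add: pos_weights_def leaf_vars_def)
  moreover have "eqN (Pre Tau (Dirac E)) (tau_leaves [(1, Z, E)])"
    using var unfolding absorbs_def tau_leaves_def by (simp add: cong_pre cong_dirac transN[OF _ N1])
  then have "absorbs (Pre Tau (Dirac E)) (tau_leaves [(1, Z, E)])"
    by (rule absorbs_cong[OF symN reflN absorbs_refl])
  ultimately show ?thesis by (rule that)
next
  case (leaves L)
  have "absorbs (Pre Tau (Dirac (Plus E (tau_leaves L)))) (tau_leaves L)"
    using T2_wchoice[of "[(1, E)]" "tau_leaves L"] by (simp add: pos_weights_def)
  moreover have "eqN (Pre Tau (Dirac (Plus E (tau_leaves L)))) (Pre Tau (Dirac E))"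
    using leaves(3) unfolding absorbs_def by (rule cong_pre[OF cong_dirac[OF symN]])
  ultimately have "absorbs (Pre Tau (Dirac E)) (tau_leaves L)" by (rule absorbs_cong[OF _ reflN, rotated])
  with leaves(1,2) show ?thesis by (rule that)
qed

lemma ung_summandP_Dirac:
  assumes "ung_summand E W"
  shows "ung_summandP (Dirac E) W"
proof -
  obtain L where "pos_weights L" "leaf_vars L = W" "absorbs (Pre Tau (Dirac E)) (tau_leaves L)"
    using assms by (rule tau_Dirac_absorbs_tau_leaves)
  then show ?thesis
    unfolding ung_summandP_def by (intro exI[of _ "[(1, E, L)]"]) (simp add: pos_weights_def reflP)
qed

lemma ung_summandP_PPlus:
  assumes "ung_summandP P W" "ung_summandP Q W'"
  shows "ung_summandP (PPlus P p Q) (W \<union> W')"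
proof -
  let ?D = "\<lambda>M. map (\<lambda>(p, E, L). (p, Dirac E)) M"
  obtain M1 where M1: "pos_weights M1"
    "\<forall>(p, E, L)\<in>set M1. pos_weights L \<and> absorbs (Pre Tau (Dirac E)) (tau_leaves L)"
    "(\<Union>(p, E, L)\<in>set M1. leaf_vars L) = W" "eqP P (wchoice (?D M1))"
    using assms(1) unfolding ung_summandP_def by blast
  obtain M2 where M2: "pos_weights M2"
    "\<forall>(p, E, L)\<in>set M2. pos_weights L \<and> absorbs (Pre Tau (Dirac E)) (tau_leaves L)"
    "(\<Union>(p, E, L)\<in>set M2. leaf_vars L) = W'" "eqP Q (wchoice (?D M2))"
    using assms(2) unfolding ung_summandP_def by blast
  define r where "r = Rep_prob p"
  have r: "0 < r" "r < 1" using Rep_prob[of p] by (auto simp: r_def)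
  define k1 k2 where "k1 = r / weight M1" and "k2 = (1 - r) / weight M2"
  have k: "0 < k1" "0 < k2"
    using r weight_pos[OF M1(1)] weight_pos[OF M2(1)] by (simp_all add: k1_def k2_def)
  define M where "M = scale_weights k1 M1 @ scale_weights k2 M2"
  have pos: "pos_weights (scale_weights k1 (?D M1))" "pos_weights (scale_weights k2 (?D M2))"
  proof -
    have "pos_weights (?D M1)" "pos_weights (?D M2)"
      using M1(1) M2(1) by (auto simp: pos_weights_def split_def)
    then show "pos_weights (scale_weights k1 (?D M1))" "pos_weights (scale_weights k2 (?D M2))"
      using k by (simp_all add: pos_weights_scale_weights)
  qed
  have w: "weight (scale_weights k1 (?D M1)) = r" "weight (scale_weights k2 (?D M2)) = 1 - r"
    using weight_pos[OF M1(1)] weight_pos[OF M2(1)] by (simp_all add: k1_def k2_def)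
  have "eqP (wchoice (?D M)) (PPlus (wchoice (scale_weights k1 (?D M1))) (Abs_prob (r / (r + (1 - r))))
      (wchoice (scale_weights k2 (?D M2))))"
    using wchoice_append[OF pos] unfolding w M_def map_append map_Dirac_fst_scale_weights .
  also have "\<dots> = PPlus (wchoice (?D M1)) p (wchoice (?D M2))"
    using k by (simp add: r_def Rep_prob_inverse)
  finally have "eqP (PPlus P p Q) (wchoice (?D M))"
    by (rule transP[OF cong_pplus[OF M1(4) M2(4)] symP])
  moreover have "pos_weights M" using k M1(1) M2(1) by (auto simp: M_def pos_weights_def scale_weights_def)
  moreover have "\<forall>(p, E, L)\<in>set M. pos_weights L \<and> absorbs (Pre Tau (Dirac E)) (tau_leaves L)"
    using M1(2) M2(2) by (auto simp: M_def scale_weights_def)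
  moreover have "(\<Union>(p, E, L)\<in>set M. leaf_vars L) = W \<union> W'"
    using M1(3) M2(3) by (auto simp: M_def scale_weights_def)
  ultimately show ?thesis unfolding ung_summandP_def by blast
qed

lemma tau_wchoice_absorbs_wflatten:
  assumes M: "pos_weights M"
    and leaves: "\<forall>(p, E, L)\<in>set M. pos_weights L \<and> absorbs (Pre Tau (Dirac E)) (tau_leaves L)"
  shows "absorbs (Pre Tau (wchoice (map (\<lambda>(p, E, L). (p, Dirac E)) M)))
                 (tau_leaves (wflatten (map (\<lambda>(p, E, L). (p, L)) M)))"
proof -
  let ?l = "map (\<lambda>(p, E, L). (p, E)) M"
  let ?S = "map (\<lambda>(p, E, L). (p, wchoice (map leaf L))) M"
  have "eqN (Pre Tau (wchoice (map (\<lambda>(p, E, L). (p, Dirac E)) M)))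
      (Pre Tau (wchoice (map (\<lambda>(p, E). (p, Dirac E)) ?l)))"
    by (simp add: comp_def split_def reflN)
  also have "eqN \<dots> (Pre Tau (wchoice (map (\<lambda>(p, E). (p, Dirac (Pre Tau (Dirac E)))) ?l)))"
    using M by (intro Pre_wchoice_tau) (auto simp: pos_weights_def split_def)
  also have "eqN \<dots> (Pre Tau (wchoice (map (\<lambda>(p, E, L).
      (p, Dirac (Plus (Pre Tau (Dirac E)) (Pre Tau (wchoice (map leaf L)))))) M)))"
    using leaves by (intro cong_pre wchoice_cong)
      (auto simp: list.rel_map list_all2_same absorbs_def tau_leaves_def cong_dirac)
  finally have tau_M: "eqN (Pre Tau (wchoice (map (\<lambda>(p, E, L). (p, Dirac E)) M))) (Pre Tau (wchoice
      (map (\<lambda>(p, E, L). (p, Dirac (Plus (Pre Tau (Dirac E)) (Pre Tau (wchoice (map leaf L)))))) M)))" .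
  have T3: "absorbs (Pre Tau (wchoice (map (\<lambda>(p, E, L).
      (p, Dirac (Plus (Pre Tau (Dirac E)) (Pre Tau (wchoice (map leaf L)))))) M))) (Pre Tau (wchoice ?S))"
    using T3_wchoice[of "map (\<lambda>(p, E, L). (p, Pre Tau (Dirac E), wchoice (map leaf L))) M" Tau] M
    by (simp add: comp_def split_def pos_weights_def)
  have "pos_weights (map (\<lambda>(p, E, L). (p, map leaf L)) M)"
       "\<forall>(w, l)\<in>set (map (\<lambda>(p, E, L). (p, map leaf L)) M). pos_weights l"
    using M leaves by (auto simp: pos_weights_def[of M] pos_weights_def[of "map _ M"])
  then have "eqP (wchoice (map (\<lambda>(w, l). (w, wchoice l)) (map (\<lambda>(p, E, L). (p, map leaf L)) M)))
      (wchoice (wflatten (map (\<lambda>(p, E, L). (p, map leaf L)) M)))"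
    by (rule wchoice_wflatten)
  then have "eqP (wchoice ?S) (wchoice (map leaf (wflatten (map (\<lambda>(p, E, L). (p, L)) M))))"
    by (simp add: map_leaf_wflatten comp_def split_def)
  then show ?thesis
    unfolding tau_leaves_def by (rule absorbs_cong[OF symN[OF tau_M] cong_pre T3])
qed

lemma ung_summand_Pre_Tau:
  assumes "ung_summandP P W"
  shows "ung_summand (Pre Tau P) W"
proof -
  obtain M where M: "pos_weights M"
    and leaves: "\<forall>(p, E, L)\<in>set M. pos_weights L \<and> absorbs (Pre Tau (Dirac E)) (tau_leaves L)"
    and W: "(\<Union>(p, E, L)\<in>set M. leaf_vars L) = W"
    and P: "eqP P (wchoice (map (\<lambda>(p, E, L). (p, Dirac E)) M))"
    using assms unfolding ung_summandP_def by blast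
  let ?L = "wflatten (map (\<lambda>(p, E, L). (p, L)) M)"
  have "absorbs (Pre Tau P) (tau_leaves ?L)"
    using tau_wchoice_absorbs_wflatten[OF M leaves] by (rule absorbs_cong[OF cong_pre[OF symP[OF P]] reflN])
  moreover have "pos_weights ?L"
    using M leaves by (intro pos_weights_wflatten) (auto simp: pos_weights_def)
  moreover have "leaf_vars ?L = W" using W by (auto simp: leaf_vars_wflatten)
  ultimately show ?thesis unfolding ung_summand_def by blast
qed

lemma ungN_imp_ung_summand:
  fixes E :: "('a, 'v) nexp" and P :: "('a, 'v) pexp"
  shows "ungN E W \<Longrightarrow> ung_summand E W" and "ungP P W \<Longrightarrow> ung_summandP P W"
  by (induction E W and P W rule: ungN_ungP.inducts)
     (simp_all add: ung_summand_V ung_summand_Pre_Tau ung_summand_Rec ung_summand_PlusI1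
       ung_summand_PlusI2 ung_summandP_Dirac ung_summandP_PPlus)

lemma tau_leaves_absorbs_var:
  assumes "pos_weights L" "leaf_vars L = {X}"
  shows "absorbs (tau_leaves L) (V X)"
proof -
  let ?xs = "map (\<lambda>(q, Z, E). (q, E)) L"
  have leaves: "eqP (wchoice (map (\<lambda>(p, E). (p, Dirac (Plus E (V X)))) ?xs)) (wchoice (map leaf L))"
  proof (intro wchoice_cong)
    have "Z = X" if "(q, Z, E) \<in> set L" for q Z E
      using assms(2) that unfolding leaf_vars_def by force
    then show "list_all2 (\<lambda>(p, P) (q, Q). p = q \<and> eqP P Q)
        (map (\<lambda>(p, E). (p, Dirac (Plus E (V X)))) ?xs) (map leaf L)"
      by (auto simp: list.rel_map list_all2_same intro!: cong_dirac N1)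
  qed
  have "absorbs (Pre Tau (wchoice (map (\<lambda>(p, E). (p, Dirac (Plus E (V X)))) ?xs))) (V X)"
    using assms(1) by (intro T2_wchoice) (auto simp: pos_weights_def split_def)
  then show ?thesis unfolding tau_leaves_def by (rule absorbs_cong[OF cong_pre[OF leaves] reflN])
qed

lemma ung_summand_singleton:
  assumes "ung_summand E {X}"
  shows "absorbs E (V X)"
  using assms
proof (cases rule: ung_summandE)
  case (leaves L)
  from leaves(3) tau_leaves_absorbs_var[OF leaves(1,2)] show ?thesis by (rule absorbs_trans)
qed simp

theorem mainTheorem8:
  fixes E :: "('a, 'v::infinite) nexp" and X :: 'v
  assumes "ungN E {X}"
  shows "eqN E (Plus E (V X))"
  using ung_summand_singleton[OF ungN_imp_ung_summand(1)[OF assms]] unfolding absorbs_def .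

end
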